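(* Let $k\ge 1$, let $j_1,\dots,j_h\le k$ be distinct positive integers and let $a_1,\dots,a_h$ be positive integers. Then \[ \mathbb{E}\, |\mathscr{L}(\mathbf{X}_k)|\, X_{j_1}^{a_1}\cdots X_{j_h}^{a_h} \le \frac{C_{a_1,\dots,a_h}}{j_1\cdots j_h}\,\mathbb{E}|\mathscr{L}(\mathbf{X}_k)|, \] where $C_{a_1,\dots,a_h} = \prod_{i=1}^h (B_{a_i}+B_{a_i+1})$ and $B_m$ denotes the $m$-th Bell number (so $B_1=1,B_2=2,B_3=5,\dots$). In particular one may take $C_1=3$.
   Context: Let $X_1,X_2,\dots$ be independent random variables with $X_j$ Poisson distributed with parameter $1/j$, and $\mathbf{X}_k=(X_1,\dots,X_k)$. For a finite list $\mathbf{c}=(c_1,\dots,c_k)$ of non-negative integers, $\mathscr{L}(\mathbf{c}) = \{m_1+2m_2+\cdots+km_k : 0\le m_j\le c_j \text{ for } j=1,\dots,k\}$, and $|\cdot|$ denotes cardinality. The $m$-th Bell number $B_m$ equals $\mathbb{E}X^m$ for $X$ Poisson with parameter $1$. *)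

theory Defs
  imports "HOL-Probability.Probability"
begin

definition Lset :: "nat \<Rightarrow> (nat \<Rightarrow> nat) \<Rightarrow> nat set" where
  "Lset k c = {(\<Sum>j=1..k. j * m j) | m. \<forall>j\<in>{1..k}. m j \<le> c j}"

definition Bell :: "nat \<Rightarrow> real" where
  "Bell m = measure_pmf.expectation (poisson_pmf 1) (\<lambda>n. real n ^ m)"

end

theory Submission
  imports Defs
begin

text \<open>
  Let J = {j_1, ..., j_h} and let c' be c with the coordinates in J set to zero. Every element
  of L(c) is an element of L(c') plus a sum of j m_j over j in J with m_j \<le> c_j, hence
  |L(c)| \<Prod>_{j in J} c_j^a_j \<le> |L(c')| \<Prod>_{j in J} (c_j + 1) c_j^a_j. For c = X_k the two
  factors on the right are independent and |L(c')| \<le> |L(X_k)|. Finally, for a Poisson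
  variable N of parameter \<lambda> \<le> 1 the identity E N^(a+1) = \<lambda> E (N+1)^a gives E N^a \<le> \<lambda> B_a
  for a \<ge> 1, whence E (X_j + 1) X_j^a \<le> (B_a + B_(a+1)) / j.
\<close>

text \<open>Moments are taken in ennreal, so that their recursion needs no integrability side conditions.\<close>

definition poisson_moment :: "real \<Rightarrow> nat \<Rightarrow> ennreal" where
  "poisson_moment l a = (\<integral>\<^sup>+ n. ennreal (real n ^ a) \<partial>measure_pmf (poisson_pmf l))"

lemma pmf_poisson_Suc:
  assumes "0 < l"
  shows "pmf (poisson_pmf l) (Suc n) * real (Suc n) = l * pmf (poisson_pmf l) n"
  using assms by (simp add: pmf_poisson[OF assms] field_simps del: of_nat_Suc)

lemma nn_integral_poisson_times_self:
  assumes l: "0 < l"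
  shows "(\<integral>\<^sup>+ n. ennreal (real n) * f n \<partial>measure_pmf (poisson_pmf l))
       = ennreal l * (\<integral>\<^sup>+ n. f (Suc n) \<partial>measure_pmf (poisson_pmf l))"
proof -
  let ?p = "pmf (poisson_pmf l)"
  have "(\<integral>\<^sup>+ n. ennreal (real n) * f n \<partial>measure_pmf (poisson_pmf l))
      = (\<Sum>n. ennreal (?p n) * (ennreal (real n) * f n))"
    by (simp add: nn_integral_measure_pmf nn_integral_count_space_nat)
  also have "\<dots> = (\<Sum>n. ennreal (?p (Suc n)) * (ennreal (real (Suc n)) * f (Suc n)))"
    by (subst suminf_offset[where i=1]) (auto intro: summableI)
  also have "\<dots> = (\<Sum>n. ennreal l * (ennreal (?p n) * f (Suc n)))"
    using l
    by (simp add: mult.assoc[symmetric] ennreal_mult[symmetric] pmf_poisson_Suc del: of_nat_Suc)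
  also have "\<dots> = ennreal l * (\<integral>\<^sup>+ n. f (Suc n) \<partial>measure_pmf (poisson_pmf l))"
    by (simp add: nn_integral_measure_pmf nn_integral_count_space_nat)
  finally show ?thesis .
qed

lemma poisson_moment_0: "poisson_moment l 0 = 1"
  by (simp add: poisson_moment_def measure_pmf.emeasure_space_1)

lemma poisson_moment_Suc:
  assumes "0 < l"
  shows "poisson_moment l (Suc a) = ennreal l * (\<Sum>b\<le>a. of_nat (a choose b) * poisson_moment l b)"
proof -
  have "poisson_moment l (Suc a)
      = (\<integral>\<^sup>+ n. ennreal (real n) * ennreal (real n ^ a) \<partial>measure_pmf (poisson_pmf l))"
    unfolding poisson_moment_def by (simp add: ennreal_mult[symmetric])
  also have "\<dots> = ennreal l * (\<integral>\<^sup>+ n. ennreal (real (Suc n) ^ a) \<partial>measure_pmf (poisson_pmf l))"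
    by (rule nn_integral_poisson_times_self[OF assms])
  also have "(\<lambda>n. ennreal (real (Suc n) ^ a))
      = (\<lambda>n. \<Sum>b\<le>a. of_nat (a choose b) * ennreal (real n ^ b))"
  proof
    fix n
    have "real (Suc n) ^ a = (\<Sum>b\<le>a. real (a choose b) * real n ^ b)"
      using binomial_ring[of "real n" 1 a] by (simp add: add.commute)
    then show "ennreal (real (Suc n) ^ a) = (\<Sum>b\<le>a. of_nat (a choose b) * ennreal (real n ^ b))"
      by (simp add: ennreal_of_nat_eq_real_of_nat flip: ennreal_mult)
  qed
  finally show ?thesis
    unfolding poisson_moment_def by (simp add: nn_integral_sum nn_integral_cmult)
qed

lemma poisson_moment_finite:
  assumes "0 < l"
  shows "poisson_moment l a < \<infinity>"
proof (induction a rule: less_induct)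
  case (less a)
  then show ?case
    using assms by (cases a) (auto simp: poisson_moment_0 poisson_moment_Suc
        ennreal_mult_less_top of_nat_less_top)
qed

lemma poisson_moment_mono:
  assumes "0 < l" "l \<le> l'"
  shows "poisson_moment l a \<le> poisson_moment l' a"
proof (induction a rule: less_induct)
  case (less a)
  show ?case
  proof (cases a)
    case (Suc c)
    have "poisson_moment l a = ennreal l * (\<Sum>b\<le>c. of_nat (c choose b) * poisson_moment l b)"
      using Suc poisson_moment_Suc[OF assms(1)] by simp
    also have "\<dots> \<le> ennreal l' * (\<Sum>b\<le>c. of_nat (c choose b) * poisson_moment l' b)"
      using less Suc assms(2) by (intro mult_mono sum_mono) (auto intro: ennreal_leI)
    also have "\<dots> = poisson_moment l' a"
      using Suc poisson_moment_Suc[of l' c] assms by simp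
    finally show ?thesis .
  qed (simp add: poisson_moment_0)
qed

lemma integrable_poisson_power:
  assumes "0 < l"
  shows "integrable (measure_pmf (poisson_pmf l)) (\<lambda>n. real n ^ a)"
  using poisson_moment_finite[OF assms, of a]
  by (intro integrableI_nonneg) (auto simp: poisson_moment_def)

lemma expectation_poisson_power:
  "measure_pmf.expectation (poisson_pmf l) (\<lambda>n. real n ^ a) = enn2real (poisson_moment l a)"
  unfolding poisson_moment_def by (rule integral_eq_nn_integral) auto

lemma expectation_poisson_power_le:
  assumes "0 < l" "l \<le> 1" "a \<ge> 1"
  shows "measure_pmf.expectation (poisson_pmf l) (\<lambda>n. real n ^ a) \<le> l * Bell a"
proof -
  obtain c where a: "a = Suc c" using assms(3) by (cases a) auto
  have "poisson_moment l a = ennreal l * (\<Sum>b\<le>c. of_nat (c choose b) * poisson_moment l b)"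
    using a poisson_moment_Suc[OF assms(1)] by simp
  also have "\<dots> \<le> ennreal l * (\<Sum>b\<le>c. of_nat (c choose b) * poisson_moment 1 b)"
    using assms by (intro mult_left_mono sum_mono poisson_moment_mono) auto
  also have "\<dots> = ennreal l * poisson_moment 1 a"
    using a poisson_moment_Suc[of 1 c] by simp
  finally have "enn2real (poisson_moment l a) \<le> l * enn2real (poisson_moment 1 a)"
    using assms poisson_moment_finite[of 1 a]
    by (auto dest!: enn2real_mono simp: enn2real_mult ennreal_mult_less_top)
  then show ?thesis
    by (simp add: Bell_def expectation_poisson_power)
qed

lemma expectation_poisson_Suc_times_power_le:
  assumes "0 < l" "l \<le> 1" "a \<ge> 1"
  shows "integrable (measure_pmf (poisson_pmf l)) (\<lambda>n. (real n + 1) * real n ^ a)"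
    and "measure_pmf.expectation (poisson_pmf l) (\<lambda>n. (real n + 1) * real n ^ a)
           \<le> l * (Bell a + Bell (a + 1))"
proof -
  have split: "(\<lambda>n. (real n + 1) * real n ^ a) = (\<lambda>n. real n ^ (a + 1) + real n ^ a)"
    by (auto simp: algebra_simps)
  show "integrable (measure_pmf (poisson_pmf l)) (\<lambda>n. (real n + 1) * real n ^ a)"
    unfolding split using assms
    by (intro Bochner_Integration.integrable_add integrable_poisson_power)
  have "measure_pmf.expectation (poisson_pmf l) (\<lambda>n. (real n + 1) * real n ^ a)
      = measure_pmf.expectation (poisson_pmf l) (\<lambda>n. real n ^ (a + 1))
        + measure_pmf.expectation (poisson_pmf l) (\<lambda>n. real n ^ a)"
    unfolding split by (intro Bochner_Integration.integral_add integrable_poisson_power assms(1))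
  also have "\<dots> \<le> l * Bell (a + 1) + l * Bell a"
    using assms by (intro add_mono expectation_poisson_power_le) auto
  finally show "measure_pmf.expectation (poisson_pmf l) (\<lambda>n. (real n + 1) * real n ^ a)
      \<le> l * (Bell a + Bell (a + 1))"
    by (simp add: algebra_simps)
qed

lemma Lset_subset_atMost: "Lset k c \<subseteq> {..(\<Sum>j=1..k. j * c j)}"
  unfolding Lset_def by (auto intro!: sum_mono mult_le_mono2)

lemma finite_Lset [simp]: "finite (Lset k c)"
  using Lset_subset_atMost finite_subset by blast

lemma card_Lset_le: "card (Lset k c) \<le> 1 + (\<Sum>j=1..k. j * c j)"
  using card_mono[OF _ Lset_subset_atMost[of k c]] by simp

lemma Lset_cong: "(\<And>j. j \<in> {1..k} \<Longrightarrow> c j = d j) \<Longrightarrow> Lset k c = Lset k d"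
  unfolding Lset_def by auto

lemma Lset_mono: "(\<And>j. j \<in> {1..k} \<Longrightarrow> c j \<le> d j) \<Longrightarrow> Lset k c \<subseteq> Lset k d"
  unfolding Lset_def by (blast intro: le_trans)

lemma card_Lset_le_zeroed:
  "card (Lset k (\<lambda>j. if j \<in> J then 0 else c j)) \<le> card (Lset k c)"
  by (intro card_mono finite_Lset Lset_mono) simp

lemma card_Lset_le_prod_card_Lset:
  assumes J: "J \<subseteq> {1..k}"
  shows "card (Lset k c) \<le> (\<Prod>j\<in>J. c j + 1) * card (Lset k (\<lambda>j. if j \<in> J then 0 else c j))"
proof -
  have "finite J" using J finite_subset by blast
  let ?S = "PiE J (\<lambda>j. {..c j})"
  let ?T = "Lset k (\<lambda>j. if j \<in> J then 0 else c j)"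
  let ?f = "\<lambda>(m, t). (\<Sum>j\<in>J. j * m j) + t"
  have "Lset k c \<subseteq> ?f ` (?S \<times> ?T)"
  proof
    fix x assume "x \<in> Lset k c"
    then obtain m where x: "x = (\<Sum>j=1..k. j * m j)" and m: "\<forall>j\<in>{1..k}. m j \<le> c j"
      unfolding Lset_def by auto
    define m0 where "m0 j = (if j \<in> J then 0 else m j)" for j
    have "x = (\<Sum>j=1..k. (if j \<in> J then j * m j else 0) + j * m0 j)"
      unfolding x by (intro sum.cong) (auto simp: m0_def)
    also have "\<dots> = (\<Sum>j\<in>J. j * m j) + (\<Sum>j=1..k. j * m0 j)"
      using J by (simp add: sum.distrib sum.inter_restrict[symmetric] Int_absorb1)
    finally have "x = ?f (restrict m J, \<Sum>j=1..k. j * m0 j)" by simp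
    moreover have "(\<Sum>j=1..k. j * m0 j) \<in> ?T"
      unfolding Lset_def using m by (intro CollectI exI[of _ m0]) (auto simp: m0_def)
    moreover have "restrict m J \<in> ?S" using m J by auto
    ultimately show "x \<in> ?f ` (?S \<times> ?T)" by blast
  qed
  then have "card (Lset k c) \<le> card (?f ` (?S \<times> ?T))"
    using \<open>finite J\<close> by (intro card_mono finite_imageI finite_cartesian_product finite_PiE) auto
  also have "\<dots> \<le> card (?S \<times> ?T)"
    using \<open>finite J\<close> by (intro card_image_le finite_cartesian_product finite_PiE) auto
  also have "\<dots> = card ?S * card ?T"
    by (rule card_cartesian_product)
  also have "card ?S = (\<Prod>j\<in>J. c j + 1)" using \<open>finite J\<close> by (simp add: card_PiE)
  finally show ?thesis .
qed

lemma card_Lset_times_prod_power_le: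
  assumes "J \<subseteq> {1..k}"
  shows "real (card (Lset k c)) * (\<Prod>j\<in>J. real (c j) ^ e j)
    \<le> (\<Prod>j\<in>J. (real (c j) + 1) * real (c j) ^ e j)
        * real (card (Lset k (\<lambda>j. if j \<in> J then 0 else c j)))"
proof -
  have "real (card (Lset k c))
      \<le> (\<Prod>j\<in>J. real (c j) + 1) * real (card (Lset k (\<lambda>j. if j \<in> J then 0 else c j)))"
    using of_nat_mono[OF card_Lset_le_prod_card_Lset[OF assms, of c], where 'a = real]
    by (simp add: of_nat_prod add.commute)
  then have "real (card (Lset k c)) * (\<Prod>j\<in>J. real (c j) ^ e j)
      \<le> (\<Prod>j\<in>J. real (c j) + 1) * real (card (Lset k (\<lambda>j. if j \<in> J then 0 else c j)))
        * (\<Prod>j\<in>J. real (c j) ^ e j)"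
    by (rule mult_right_mono) (simp add: prod_nonneg)
  then show ?thesis
    by (simp add: prod.distrib mult_ac)
qed

definition depends_only_on :: "'i set \<Rightarrow> (('i \<Rightarrow> 'b) \<Rightarrow> 'c) \<Rightarrow> bool" where
  "depends_only_on I F \<longleftrightarrow> (\<forall>c d. (\<forall>i\<in>I. c i = d i) \<longrightarrow> F c = F d)"

lemma depends_only_on_restrict: "depends_only_on I F \<Longrightarrow> F (restrict c I) = F c"
  unfolding depends_only_on_def by simp

lemma depends_only_on_card_Lset:
  "depends_only_on ({1..k} - J) (\<lambda>c. real (card (Lset k (\<lambda>j. if j \<in> J then 0 else c j))))"
  unfolding depends_only_on_def
proof (intro allI impI)
  fix c d :: "nat \<Rightarrow> nat" assume "\<forall>i\<in>{1..k} - J. c i = d i"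
  then have "Lset k (\<lambda>j. if j \<in> J then 0 else c j) = Lset k (\<lambda>j. if j \<in> J then 0 else d j)"
    by (intro Lset_cong) auto
  then show "real (card (Lset k (\<lambda>j. if j \<in> J then 0 else c j)))
      = real (card (Lset k (\<lambda>j. if j \<in> J then 0 else d j)))" by simp
qed

text \<open>The limiting cycle counts of a uniformly random permutation.\<close>

locale poisson_cycle_counts = prob_space M
  for M :: "'a measure" and X :: "nat \<Rightarrow> 'a \<Rightarrow> nat" +
  assumes random_variable_X: "j \<ge> 1 \<Longrightarrow> X j \<in> measurable M (count_space UNIV)"
    and indep_vars_X: "indep_vars (\<lambda>_. count_space UNIV) X {1..}"
    and distr_X: "j \<ge> 1 \<Longrightarrow>
      distr M (count_space UNIV) (X j) = measure_pmf (poisson_pmf (1 / real j))"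
begin

lemma
  fixes g :: "nat \<Rightarrow> real"
  assumes "j \<ge> 1" "integrable (measure_pmf (poisson_pmf (1 / real j))) g"
  shows integrable_comp_X: "integrable M (\<lambda>\<omega>. g (X j \<omega>))"
    and expectation_comp_X:
      "expectation (\<lambda>\<omega>. g (X j \<omega>)) = measure_pmf.expectation (poisson_pmf (1 / real j)) g"
  using assms random_variable_X[OF assms(1)] distr_X[OF assms(1), symmetric]
  by (simp_all add: integrable_distr_eq integral_distr)

lemma borel_measurable_depends_only_on:
  assumes "finite I" "I \<subseteq> {1..}" "depends_only_on I F"
  shows "(\<lambda>\<omega>. F (\<lambda>j. X j \<omega>)) \<in> borel_measurable M"
proof -
  have "F \<circ> (\<lambda>\<omega>. restrict (\<lambda>j. X j \<omega>) I) \<in> borel_measurable M"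
    using assms(1,2) random_variable_X
    by (intro measurable_comp[OF measurable_restrict]) (auto simp: count_space_PiM_finite)
  then show ?thesis
    using assms(3) by (simp add: comp_def depends_only_on_restrict)
qed

lemma indep_var_depends_only_on:
  assumes "finite I" "finite I'" "I \<inter> I' = {}" "I \<subseteq> {1..}" "I' \<subseteq> {1..}"
    and "depends_only_on I F" "depends_only_on I' F'"
  shows "indep_var borel (\<lambda>\<omega>. F (\<lambda>j. X j \<omega>)) borel (\<lambda>\<omega>. F' (\<lambda>j. X j \<omega>))"
proof -
  have "indep_var borel (F \<circ> (\<lambda>\<omega>. restrict (\<lambda>j. X j \<omega>) I))
      borel (F' \<circ> (\<lambda>\<omega>. restrict (\<lambda>j. X j \<omega>) I'))"
    using assms(1-5)
    by (intro indep_var_compose[OF indep_var_restrict[OF indep_vars_X]])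
       (auto simp: count_space_PiM_finite)
  then show ?thesis
    using assms(6,7) by (simp add: comp_def depends_only_on_restrict)
qed

lemma integrable_card_Lset:
  "integrable M (\<lambda>\<omega>. real (card (Lset k (\<lambda>j. if j \<in> J then 0 else X j \<omega>))))"
proof (rule Bochner_Integration.integrable_bound)
  show "integrable M (\<lambda>\<omega>. 1 + (\<Sum>j=1..k. real j * real (X j \<omega>)))"
    using integrable_comp_X[OF _ integrable_poisson_power[of _ 1]]
    by (intro Bochner_Integration.integrable_add integrable_const Bochner_Integration.integrable_sum
        integrable_mult_right) auto
  show "(\<lambda>\<omega>. real (card (Lset k (\<lambda>j. if j \<in> J then 0 else X j \<omega>)))) \<in> borel_measurable M"
    by (rule borel_measurable_depends_only_on[OF _ _ depends_only_on_card_Lset]) auto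
  show "AE \<omega> in M. norm (real (card (Lset k (\<lambda>j. if j \<in> J then 0 else X j \<omega>))))
      \<le> norm (1 + (\<Sum>j=1..k. real j * real (X j \<omega>)))"
  proof (intro AE_I2)
    fix \<omega>
    have "card (Lset k (\<lambda>j. if j \<in> J then 0 else X j \<omega>)) \<le> 1 + (\<Sum>j=1..k. j * X j \<omega>)"
      using card_Lset_le_zeroed[of k J] card_Lset_le[of k] by (rule le_trans)
    from of_nat_mono[OF this, where 'a = real]
    show "norm (real (card (Lset k (\<lambda>j. if j \<in> J then 0 else X j \<omega>))))
        \<le> norm (1 + (\<Sum>j=1..k. real j * real (X j \<omega>)))"
      by (simp add: sum_nonneg)
  qed
qed

lemma
  assumes "finite J" "J \<subseteq> {1..}" "\<And>j. j \<in> J \<Longrightarrow> e j \<ge> 1"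
  shows integrable_prod_Suc_times_power:
      "integrable M (\<lambda>\<omega>. \<Prod>j\<in>J. (real (X j \<omega>) + 1) * real (X j \<omega>) ^ e j)"
    and expectation_prod_Suc_times_power_le:
      "expectation (\<lambda>\<omega>. \<Prod>j\<in>J. (real (X j \<omega>) + 1) * real (X j \<omega>) ^ e j)
         \<le> (\<Prod>j\<in>J. (Bell (e j) + Bell (e j + 1)) / real j)"
proof -
  define Z where "Z j \<omega> = (real (X j \<omega>) + 1) * real (X j \<omega>) ^ e j" for j \<omega>
  have indep: "indep_vars (\<lambda>_. borel) Z J"
    unfolding Z_def
    by (rule indep_vars_subset[OF indep_vars_compose2[OF indep_vars_X] assms(2)]) auto
  have Z: "integrable M (Z j) \<and> expectation (Z j) \<le> (Bell (e j) + Bell (e j + 1)) / real j"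
    if "j \<in> J" for j
  proof -
    have j: "j \<ge> 1" "0 < 1 / real j" "1 / real j \<le> 1" using that assms(2) by auto
    note moment = expectation_poisson_Suc_times_power_le[OF j(2,3) assms(3)[OF that]]
    show ?thesis
      using integrable_comp_X[OF j(1) moment(1)] expectation_comp_X[OF j(1) moment(1)] moment(2)
      by (simp add: Z_def[abs_def])
  qed
  show "integrable M (\<lambda>\<omega>. \<Prod>j\<in>J. (real (X j \<omega>) + 1) * real (X j \<omega>) ^ e j)"
    using indep_vars_integrable[OF assms(1) indep] Z by (simp add: Z_def)
  have "expectation (\<lambda>\<omega>. \<Prod>j\<in>J. Z j \<omega>) = (\<Prod>j\<in>J. expectation (Z j))"
    using indep_vars_lebesgue_integral[OF assms(1) indep] Z by simp
  also have "\<dots> \<le> (\<Prod>j\<in>J. (Bell (e j) + Bell (e j + 1)) / real j)"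
    using Z by (intro prod_mono) (auto simp: Z_def)
  finally show "expectation (\<lambda>\<omega>. \<Prod>j\<in>J. (real (X j \<omega>) + 1) * real (X j \<omega>) ^ e j)
      \<le> (\<Prod>j\<in>J. (Bell (e j) + Bell (e j + 1)) / real j)"
    by (simp add: Z_def)
qed

lemma
  assumes J: "J \<subseteq> {1..k}" and e: "\<And>j. j \<in> J \<Longrightarrow> e j \<ge> 1"
  shows integrable_prod_times_card_Lset_zeroed:
      "integrable M (\<lambda>\<omega>. (\<Prod>j\<in>J. (real (X j \<omega>) + 1) * real (X j \<omega>) ^ e j)
         * real (card (Lset k (\<lambda>j. if j \<in> J then 0 else X j \<omega>))))"
    and expectation_prod_times_card_Lset_zeroed_le:
      "expectation (\<lambda>\<omega>. (\<Prod>j\<in>J. (real (X j \<omega>) + 1) * real (X j \<omega>) ^ e j)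
         * real (card (Lset k (\<lambda>j. if j \<in> J then 0 else X j \<omega>))))
       \<le> (\<Prod>j\<in>J. (Bell (e j) + Bell (e j + 1)) / real j)
         * expectation (\<lambda>\<omega>. real (card (Lset k (\<lambda>j. X j \<omega>))))"
proof -
  have "finite J" and J1: "J \<subseteq> {1..}" using J finite_subset by auto
  define G where "G \<omega> = (\<Prod>j\<in>J. (real (X j \<omega>) + 1) * real (X j \<omega>) ^ e j)" for \<omega>
  define L0 where "L0 \<omega> = real (card (Lset k (\<lambda>j. if j \<in> J then 0 else X j \<omega>)))" for \<omega>
  define L where "L \<omega> = real (card (Lset k (\<lambda>j. X j \<omega>)))" for \<omega>
  have int_L0: "integrable M L0" and int_L: "integrable M L"
    using integrable_card_Lset[of k J] integrable_card_Lset[of k "{}"]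
    by (simp_all add: L0_def[abs_def] L_def[abs_def])
  have int_G: "integrable M G"
    using integrable_prod_Suc_times_power[of J e] \<open>finite J\<close> J1 e by (simp add: G_def[abs_def])
  have "depends_only_on J (\<lambda>c. \<Prod>j\<in>J. (real (c j) + 1) * real (c j) ^ e j)"
    by (simp add: depends_only_on_def)
  moreover have "{1..k} - J \<subseteq> {1..}" by auto
  ultimately have indep: "indep_var borel G borel L0"
    using indep_var_depends_only_on[OF \<open>finite J\<close> _ _ J1, of "{1..k} - J"]
      depends_only_on_card_Lset[of k J]
    by (auto simp: G_def[abs_def] L0_def[abs_def])
  have GL0: "(\<lambda>\<omega>. (\<Prod>j\<in>J. (real (X j \<omega>) + 1) * real (X j \<omega>) ^ e j)
      * real (card (Lset k (\<lambda>j. if j \<in> J then 0 else X j \<omega>)))) = (\<lambda>\<omega>. G \<omega> * L0 \<omega>)"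
    (is "?GL0 = _") by (simp add: G_def L0_def)
  show "integrable M ?GL0"
    unfolding GL0 by (rule indep_var_integrable[OF indep int_G int_L0])
  have "expectation ?GL0 = expectation G * expectation L0"
    unfolding GL0 by (rule indep_var_lebesgue_integral[OF indep int_G int_L0])
  also have "\<dots> \<le> (\<Prod>j\<in>J. (Bell (e j) + Bell (e j + 1)) / real j) * expectation L"
  proof (rule mult_mono)
    show "expectation G \<le> (\<Prod>j\<in>J. (Bell (e j) + Bell (e j + 1)) / real j)"
      using expectation_prod_Suc_times_power_le[of J e] \<open>finite J\<close> J1 e
      by (simp add: G_def[abs_def])
    show "expectation L0 \<le> expectation L"
      using int_L0 int_L by (rule integral_mono) (simp add: L0_def L_def card_Lset_le_zeroed)
    have "0 \<le> expectation G"
      by (rule Bochner_Integration.integral_nonneg) (simp add: G_def prod_nonneg)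
    with \<open>expectation G \<le> _\<close> show "0 \<le> (\<Prod>j\<in>J. (Bell (e j) + Bell (e j + 1)) / real j)"
      by linarith
    show "0 \<le> expectation L0"
      by (rule Bochner_Integration.integral_nonneg) (simp add: L0_def)
  qed
  finally show "expectation ?GL0 \<le> (\<Prod>j\<in>J. (Bell (e j) + Bell (e j + 1)) / real j)
      * expectation (\<lambda>\<omega>. real (card (Lset k (\<lambda>j. X j \<omega>))))"
    by (simp add: L_def[abs_def])
qed

lemma expectation_card_Lset_times_prod_power_le:
  assumes J: "J \<subseteq> {1..k}" and e: "\<And>j. j \<in> J \<Longrightarrow> e j \<ge> 1"
  shows "expectation (\<lambda>\<omega>. real (card (Lset k (\<lambda>j. X j \<omega>))) * (\<Prod>j\<in>J. real (X j \<omega>) ^ e j))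
         \<le> (\<Prod>j\<in>J. (Bell (e j) + Bell (e j + 1)) / real j)
             * expectation (\<lambda>\<omega>. real (card (Lset k (\<lambda>j. X j \<omega>))))"
    (is "expectation ?F \<le> _")
proof -
  let ?GL0 = "\<lambda>\<omega>. (\<Prod>j\<in>J. (real (X j \<omega>) + 1) * real (X j \<omega>) ^ e j)
    * real (card (Lset k (\<lambda>j. if j \<in> J then 0 else X j \<omega>)))"
  have "integrable M ?F"
  proof (rule Bochner_Integration.integrable_bound)
    show "integrable M ?GL0"
      by (rule integrable_prod_times_card_Lset_zeroed[OF J e])
    show "?F \<in> borel_measurable M"
      using J
      by (intro borel_measurable_times borel_measurable_prod borel_measurable_depends_only_on
          [OF _ _ depends_only_on_card_Lset[of k "{}"], simplified]
          measurable_compose[OF random_variable_X]) auto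
    show "AE \<omega> in M. norm (?F \<omega>) \<le> norm (?GL0 \<omega>)"
      using card_Lset_times_prod_power_le[OF J]
      by (auto intro!: AE_I2 order_trans[OF _ abs_ge_self] simp: prod_nonneg)
  qed
  then have "expectation ?F \<le> expectation ?GL0"
    using integrable_prod_times_card_Lset_zeroed[OF J e] card_Lset_times_prod_power_le[OF J]
    by (rule integral_mono)
  also have "\<dots> \<le> (\<Prod>j\<in>J. (Bell (e j) + Bell (e j + 1)) / real j)
      * expectation (\<lambda>\<omega>. real (card (Lset k (\<lambda>j. X j \<omega>))))"
    by (rule expectation_prod_times_card_Lset_zeroed_le[OF J e])
  finally show ?thesis .
qed

end

theorem lemma3p3:
  fixes M :: "'a measure" and X :: "nat \<Rightarrow> 'a \<Rightarrow> nat"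
    and k h :: nat and js as :: "nat \<Rightarrow> nat"
  assumes "prob_space M"
    and "\<And>j. j \<ge> 1 \<Longrightarrow> X j \<in> measurable M (count_space UNIV)"
    and "prob_space.indep_vars M (\<lambda>_. count_space UNIV) X {1..}"
    and "\<And>j. j \<ge> 1 \<Longrightarrow>
           distr M (count_space UNIV) (X j) = measure_pmf (poisson_pmf (1 / real j))"
    and "k \<ge> 1"
    and "inj_on js {..<h}"
    and "\<And>i. i < h \<Longrightarrow> 1 \<le> js i \<and> js i \<le> k"
    and "\<And>i. i < h \<Longrightarrow> as i \<ge> 1"
  shows "prob_space.expectation M
           (\<lambda>\<omega>. real (card (Lset k (\<lambda>j. X j \<omega>))) * (\<Prod>i<h. real (X (js i) \<omega>) ^ as i))
         \<le> (\<Prod>i<h. Bell (as i) + Bell (as i + 1)) / (\<Prod>i<h. real (js i))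
             * prob_space.expectation M (\<lambda>\<omega>. real (card (Lset k (\<lambda>j. X j \<omega>))))"
proof -
  interpret poisson_cycle_counts M X
    using assms(1-4) by (simp add: poisson_cycle_counts_def poisson_cycle_counts_axioms_def)
  define J where "J = js ` {..<h}"
  define e where "e j = as (the_inv_into {..<h} js j)" for j
  have reindex: "(\<Prod>i<h. f (as i) (js i)) = (\<Prod>j\<in>J. f (e j) j)" for f :: "nat \<Rightarrow> nat \<Rightarrow> real"
    unfolding J_def e_def using assms(6) by (simp add: prod.reindex the_inv_into_f_f)
  have "J \<subseteq> {1..k}" "\<And>j. j \<in> J \<Longrightarrow> e j \<ge> 1"
    using assms(6-8) by (auto simp: J_def e_def the_inv_into_f_f)
  note bound = expectation_card_Lset_times_prod_power_le[OF this]
  have "(\<Prod>i<h. real (X (js i) \<omega>) ^ as i) = (\<Prod>j\<in>J. real (X j \<omega>) ^ e j)" for \<omega>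
    by (rule reindex)
  moreover have "(\<Prod>i<h. Bell (as i) + Bell (as i + 1)) / (\<Prod>i<h. real (js i))
      = (\<Prod>j\<in>J. (Bell (e j) + Bell (e j + 1)) / real j)"
    using reindex[of "\<lambda>a j. (Bell a + Bell (a + 1)) / real j"] by (simp add: prod_dividef)
  ultimately show ?thesis
    using bound by simp
qed

end
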